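(* Let $\mathfrak{G}$ be a CFSTR and let $G$ be its non-flow subnetwork. The following are equivalent: (1) $\mathfrak{G}$ passes the Jacobian Criterion; (2) every square embedded network of $G$ has nonnegative orientation; (3) $G$ has no self-catalyzing reaction, and every square embedded network $N$ of $G$ satisfying both of the following has nonnegative orientation: (a) $N$ contains no outflow reaction $X_i\to0$, no inflow reaction $0\to X_i$, no generalized inflow reaction $0\to\sum_i a_iX_i$ ($a_i\ge0$), and no reaction of the form $aX_i\to bX_i$ with $0\le b\le a$; (b) each species of $N$ appears in at least two reactions of $N$, where a reaction together with its reverse is counted only once.
   Context: A chemical reaction network has species $X_1,\dots,X_s$ and reactions $y\to y'$ with complexes $y,y'\in\mathbb{Z}_{\ge0}^s$, $y\ne y'$; $y_i$ is the stoichiometric coefficient of $X_i$ in $y$. A flow reaction is $0\to X_i$ (inflow) or $X_i\to0$ (outflow); other reactions are non-flow. A CFSTR contains the outflow $X_i\to0$ for every species; its non-flow subnetwork consists of all its non-flow reactions. A reaction $y\to y'$ is self-catalyzing if some species $X_j$ has $1\le y_j<y'_j$. Square networks: for a list of $n$ reactions $y_k\to y_k'$ on $n$ species, the reactant matrix $M$ has $k$-th row $y_k$, the reaction matrix $R$ has $k$-th row $y_k-y_k'$, and the orientation is $\operatorname{Or}=\operatorname{sign}(\det M\det R)$; the empty network has orientation $+1$. Square embedded networks: for $0\le k\le s$, a $k$-square embedded network of $G$ is determined by a $k$-element set $S$ of species and a $k$-element set of non-flow reactions of $G$; it is the square network with species set $S$ whose $k$ reactions are obtained from the chosen reactions by deleting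 from both complexes all species not in $S$ (kept as a list, so repeated reactions may occur). Jacobian Criterion: a CFSTR with $s$ species passes it if for every choice of $s$ distinct reactions, none an inflow, the $s\times s$ reactant and reaction matrices of these reactions (columns indexed by all species) give nonnegative orientation. *)

theory Defs
  imports "Jordan_Normal_Form.Determinant"
begin

text \<open>Species are indexed by natural numbers; a network on s species uses
indices 0..s-1. A complex is a function from species indices to
stoichiometric coefficients; a reaction is a pair (reactant, product).\<close>

type_synonym cplx = "nat \<Rightarrow> nat"
type_synonym reaction = "cplx \<times> cplx"

definition zero_cplx :: cplx where "zero_cplx = (\<lambda>_. 0)"

definition unit_cplx :: "nat \<Rightarrow> cplx" where
  "unit_cplx i = (\<lambda>j. if j = i then 1 else 0)"

definition is_inflow :: "reaction \<Rightarrow> bool" where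
  "is_inflow r \<longleftrightarrow> (\<exists>i. r = (zero_cplx, unit_cplx i))"

definition is_outflow :: "reaction \<Rightarrow> bool" where
  "is_outflow r \<longleftrightarrow> (\<exists>i. r = (unit_cplx i, zero_cplx))"

definition is_flow :: "reaction \<Rightarrow> bool" where
  "is_flow r \<longleftrightarrow> is_inflow r \<or> is_outflow r"

definition reaction_network :: "nat \<Rightarrow> reaction set \<Rightarrow> bool" where
  "reaction_network s R \<longleftrightarrow> finite R \<and>
     (\<forall>r\<in>R. fst r \<noteq> snd r \<and> (\<forall>j. s \<le> j \<longrightarrow> fst r j = 0 \<and> snd r j = 0))"

definition CFSTR :: "nat \<Rightarrow> reaction set \<Rightarrow> bool" where
  "CFSTR s R \<longleftrightarrow> reaction_network s R \<and> (\<forall>i<s. (unit_cplx i, zero_cplx) \<in> R)"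

definition nonflow_subnetwork :: "reaction set \<Rightarrow> reaction set" where
  "nonflow_subnetwork R = {r \<in> R. \<not> is_flow r}"

definition self_catalyzing :: "reaction \<Rightarrow> bool" where
  "self_catalyzing r \<longleftrightarrow> (\<exists>j. 1 \<le> fst r j \<and> fst r j < snd r j)"

definition reactant_matrix :: "nat list \<Rightarrow> reaction list \<Rightarrow> int mat" where
  "reactant_matrix sp rs = mat (length rs) (length sp)
      (\<lambda>(a, b). int (fst (rs ! a) (sp ! b)))"

definition reaction_matrix :: "nat list \<Rightarrow> reaction list \<Rightarrow> int mat" where
  "reaction_matrix sp rs = mat (length rs) (length sp)
      (\<lambda>(a, b). int (fst (rs ! a) (sp ! b)) - int (snd (rs ! a) (sp ! b)))"

definition orientation :: "nat list \<Rightarrow> reaction list \<Rightarrow> int" where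
  "orientation sp rs = sgn (det (reactant_matrix sp rs) * det (reaction_matrix sp rs))"

definition jacobian_criterion :: "nat \<Rightarrow> reaction set \<Rightarrow> bool" where
  "jacobian_criterion s R \<longleftrightarrow>
     (\<forall>rs. distinct rs \<and> length rs = s \<and> set rs \<subseteq> R \<and> (\<forall>r\<in>set rs. \<not> is_inflow r)
        \<longrightarrow> orientation [0..<s] rs \<ge> 0)"

definition restrict_reaction :: "nat set \<Rightarrow> reaction \<Rightarrow> reaction" where
  "restrict_reaction S r =
     ((\<lambda>j. if j \<in> S then fst r j else 0), (\<lambda>j. if j \<in> S then snd r j else 0))"

text \<open>Data determining a square embedded network of G (on s species):
a species set S and a list of card S distinct reactions of G.\<close>
definition sq_embedded_data :: "nat \<Rightarrow> reaction set \<Rightarrow> nat set \<Rightarrow> reaction list \<Rightarrow> bool" where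
  "sq_embedded_data s G S rs \<longleftrightarrow>
     S \<subseteq> {..<s} \<and> distinct rs \<and> set rs \<subseteq> G \<and> length rs = card S"

definition emb_reactions :: "nat set \<Rightarrow> reaction list \<Rightarrow> reaction list" where
  "emb_reactions S rs = map (restrict_reaction S) rs"

definition emb_orientation :: "nat set \<Rightarrow> reaction list \<Rightarrow> int" where
  "emb_orientation S rs = orientation (sorted_list_of_set S) (emb_reactions S rs)"

definition is_gen_inflow :: "reaction \<Rightarrow> bool" where
  "is_gen_inflow r \<longleftrightarrow> fst r = zero_cplx"

definition is_mono_degradation :: "reaction \<Rightarrow> bool" where
  "is_mono_degradation r \<longleftrightarrow> (\<exists>i a b. b \<le> a \<and>
      fst r = (\<lambda>j. if j = i then a else 0) \<and> snd r = (\<lambda>j. if j = i then b else 0))"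

definition cond_a :: "reaction list \<Rightarrow> bool" where
  "cond_a N \<longleftrightarrow> (\<forall>r\<in>set N. \<not> is_outflow r \<and> \<not> is_inflow r \<and>
      \<not> is_gen_inflow r \<and> \<not> is_mono_degradation r)"

text \<open>Condition (b): each species of N occurs in at least two reactions of N,
a reaction and its reverse counted once (reactions identified with the
unordered pair of their complexes).\<close>
definition cond_b :: "nat set \<Rightarrow> reaction list \<Rightarrow> bool" where
  "cond_b S N \<longleftrightarrow> (\<forall>i\<in>S.
      2 \<le> card {{fst r, snd r} | r. r \<in> set N \<and> (0 < fst r i \<or> 0 < snd r i)})"

end

theory Submission
  imports Defs
begin

(*
  The engine is cofactor expansion.  If a row (a reaction) or a column (a species) of
  a square network is supported on a single entry, both the reactant and the reaction
  matrix expand along it, and the orientation equals sgn(a (a - a')) times the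
  orientation of the minor, where a -> a' are the two coefficients at that entry; the
  factor is nonnegative unless the reaction is self-catalyzing there.  A network whose
  orientation is zero or reduces to a minor in this way is called "sign-reducible",
  and a strong induction on the size shows: within any class of square networks closed
  under taking minors, if every member is nonnegative or sign-reducible then all
  orientations are nonnegative.

  (1) -> (2): complete an embedded network by the outflows of the missing species and
  expand them away.  (2) -> (1): outflows inside a Jacobian network are sign-reducible;
  without outflows it is an embedded network of G.  (2) -> (3): a self-catalyzing
  reaction gives a 1x1 embedded network of negative orientation.  (3) -> (2): a
  violation of condition (a) or (b) makes an embedded network sign-reducible.
*)

text \<open>Deleting the k-th entry of a list models deleting a row or a column.\<close>

definition delete_nth :: "nat \<Rightarrow> 'a list \<Rightarrow> 'a list" where
  "delete_nth k xs = take k xs @ drop (Suc k) xs"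

lemma length_delete_nth [simp]: "k < length xs \<Longrightarrow> length (delete_nth k xs) = length xs - 1"
  unfolding delete_nth_def by auto

lemma nth_delete_nth:
  "k < length xs \<Longrightarrow> i < length xs - 1 \<Longrightarrow>
   delete_nth k xs ! i = xs ! (if i < k then i else Suc i)"
  unfolding delete_nth_def by (auto simp: nth_append min_def)

lemma set_delete_nth_subset: "set (delete_nth k xs) \<subseteq> set xs"
  unfolding delete_nth_def using set_take_subset set_drop_subset by fastforce

lemma distinct_delete_nth: "distinct xs \<Longrightarrow> distinct (delete_nth k xs)"
  unfolding delete_nth_def using set_take_disj_set_drop_if_distinct[of xs k "Suc k"] by auto

lemma delete_nth_append: "delete_nth (length xs) (xs @ y # ys) = xs @ ys"
  unfolding delete_nth_def by simp

lemma delete_nth_map: "delete_nth k (map f xs) = map f (delete_nth k xs)"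
  unfolding delete_nth_def by (simp add: take_map drop_map)

lemma delete_nth_distinct_filter:
  "distinct xs \<Longrightarrow> k < length xs \<Longrightarrow> delete_nth k xs = filter (\<lambda>x. x \<noteq> xs ! k) xs"
proof (induction xs arbitrary: k)
  case (Cons a xs)
  then show ?case
    by (cases k) (auto simp: delete_nth_def intro: filter_True[symmetric])
qed simp

lemma sorted_delete_nth: "sorted xs \<Longrightarrow> distinct xs \<Longrightarrow> k < length xs \<Longrightarrow> sorted (delete_nth k xs)"
  by (simp add: delete_nth_distinct_filter sorted_filter[where f = id, simplified])

lemma reactant_matrix_carrier: "reactant_matrix sp rs \<in> carrier_mat (length rs) (length sp)"
  unfolding reactant_matrix_def by simp

lemma reaction_matrix_carrier: "reaction_matrix sp rs \<in> carrier_mat (length rs) (length sp)"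
  unfolding reaction_matrix_def by simp

lemma mat_delete_reactant_matrix:
  "k < length rs \<Longrightarrow> c < length sp \<Longrightarrow>
   mat_delete (reactant_matrix sp rs) k c = reactant_matrix (delete_nth c sp) (delete_nth k rs)"
  unfolding mat_delete_def reactant_matrix_def by (rule eq_matI) (auto simp: nth_delete_nth)

lemma mat_delete_reaction_matrix:
  "k < length rs \<Longrightarrow> c < length sp \<Longrightarrow>
   mat_delete (reaction_matrix sp rs) k c = reaction_matrix (delete_nth c sp) (delete_nth k rs)"
  unfolding mat_delete_def reaction_matrix_def by (rule eq_matI) (auto simp: nth_delete_nth)

lemma det_sparse_line:
  assumes A: "(A :: 'a :: comm_ring_1 mat) \<in> carrier_mat n n" and k: "k < n" and c: "c < n"
    and sparse: "(\<forall>j<n. j \<noteq> c \<longrightarrow> A $$ (k, j) = 0) \<or> (\<forall>i<n. i \<noteq> k \<longrightarrow> A $$ (i, c) = 0)"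
  shows "det A = A $$ (k, c) * cofactor A k c"
  using sparse
proof
  assume row: "\<forall>j<n. j \<noteq> c \<longrightarrow> A $$ (k, j) = 0"
  have "det A = (\<Sum>j<n. A $$ (k, j) * cofactor A k j)" by (rule laplace_expansion_row[OF A k])
  also have "\<dots> = (\<Sum>j<n. if j = c then A $$ (k, c) * cofactor A k c else 0)"
    by (rule sum.cong) (auto simp: row)
  finally show ?thesis using c by simp
next
  assume col: "\<forall>i<n. i \<noteq> k \<longrightarrow> A $$ (i, c) = 0"
  have "det A = (\<Sum>i<n. A $$ (i, c) * cofactor A i c)" by (rule laplace_expansion_column[OF A c])
  also have "\<dots> = (\<Sum>i<n. if i = k then A $$ (k, c) * cofactor A k c else 0)"
    by (rule sum.cong) (auto simp: col)
  finally show ?thesis using k by simp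
qed

lemma orientation_expand:
  assumes len: "length sp = n" "length rs = n" and k: "k < n" and c: "c < n"
    and sparse: "(\<forall>b<n. b \<noteq> c \<longrightarrow> fst (rs!k) (sp!b) = 0 \<and> snd (rs!k) (sp!b) = 0) \<or>
                 (\<forall>b<n. b \<noteq> k \<longrightarrow> fst (rs!b) (sp!c) = 0 \<and> snd (rs!b) (sp!c) = 0)"
  shows "orientation sp rs =
           sgn (int (fst (rs!k) (sp!c)) * (int (fst (rs!k) (sp!c)) - int (snd (rs!k) (sp!c))))
           * orientation (delete_nth c sp) (delete_nth k rs)"
proof -
  let ?M = "reactant_matrix sp rs" and ?R = "reaction_matrix sp rs"
  let ?a = "int (fst (rs!k) (sp!c))" and ?d = "int (fst (rs!k) (sp!c)) - int (snd (rs!k) (sp!c))"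
  let ?s = "(-1::int) ^ (k + c)"
  let ?X = "det (reactant_matrix (delete_nth c sp) (delete_nth k rs))"
  let ?Y = "det (reaction_matrix (delete_nth c sp) (delete_nth k rs))"
  have M: "?M \<in> carrier_mat n n" and R: "?R \<in> carrier_mat n n"
    using reactant_matrix_carrier reaction_matrix_carrier len by metis+
  have zero_M: "?M $$ (i, j) = 0" and zero_R: "?R $$ (i, j) = 0"
    if "i < n" "j < n" "fst (rs!i) (sp!j) = 0 \<and> snd (rs!i) (sp!j) = 0" for i j
    using that len by (auto simp: reactant_matrix_def reaction_matrix_def)
  have "det ?M = ?M $$ (k, c) * cofactor ?M k c"
    by (rule det_sparse_line[OF M k c]) (use sparse zero_M k c in meson)
  then have dM: "det ?M = ?a * (?s * ?X)"
    using k c len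
    by (simp add: cofactor_def mat_delete_reactant_matrix, simp add: reactant_matrix_def)
  have "det ?R = ?R $$ (k, c) * cofactor ?R k c"
    by (rule det_sparse_line[OF R k c]) (use sparse zero_R k c in meson)
  then have dR: "det ?R = ?d * (?s * ?Y)"
    using k c len
    by (simp add: cofactor_def mat_delete_reaction_matrix, simp add: reaction_matrix_def)
  have "?a * (?s * ?X) * (?d * (?s * ?Y)) = (?a * ?d) * (?s * ?s) * (?X * ?Y)"
    by (simp add: algebra_simps)
  also have "\<dots> = (?a * ?d) * (?X * ?Y)"
    by (simp flip: power_mult_distrib)
  finally show ?thesis
    unfolding orientation_def dM dR by (simp add: sgn_mult)
qed

lemma orientation_zero_reactant_row:
  assumes len: "length sp = n" "length rs = n" and k: "k < n"
    and zero: "\<And>b. b < n \<Longrightarrow> fst (rs!k) (sp!b) = 0"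
  shows "orientation sp rs = 0"
proof -
  let ?M = "reactant_matrix sp rs"
  have M: "?M \<in> carrier_mat n n" using reactant_matrix_carrier len by metis
  have "det ?M = ?M $$ (k, 0) * cofactor ?M k 0"
    by (rule det_sparse_line[OF M k]) (use zero len k in \<open>auto simp: reactant_matrix_def\<close>)
  then have "det ?M = 0" using zero len k by (simp add: reactant_matrix_def)
  then show ?thesis unfolding orientation_def by simp
qed

lemma orientation_zero_reactant_col:
  assumes len: "length sp = n" "length rs = n" and c: "c < n"
    and zero: "\<And>b. b < n \<Longrightarrow> fst (rs!b) (sp!c) = 0"
  shows "orientation sp rs = 0"
proof -
  let ?M = "reactant_matrix sp rs"
  have M: "?M \<in> carrier_mat n n" using reactant_matrix_carrier len by metis
  have "det ?M = ?M $$ (0, c) * cofactor ?M 0 c"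
    by (rule det_sparse_line[OF M _ c]) (use zero len c in \<open>auto simp: reactant_matrix_def\<close>)
  then have "det ?M = 0" using zero len c by (simp add: reactant_matrix_def)
  then show ?thesis unfolding orientation_def by simp
qed

text \<open>Two rows carrying the same reaction, or a reaction and its reverse, make the
  reactant resp. the reaction matrix singular.\<close>

lemma orientation_same_pair:
  assumes len: "length sp = n" "length rs = n" and k: "k1 < n" "k2 < n" "k1 \<noteq> k2"
    and pair: "{fst (rs!k1), snd (rs!k1)} = {fst (rs!k2), snd (rs!k2)}"
  shows "orientation sp rs = 0"
proof -
  let ?M = "reactant_matrix sp rs" and ?R = "reaction_matrix sp rs"
  have M: "?M \<in> carrier_mat n n" and R: "?R \<in> carrier_mat n n"
    using reactant_matrix_carrier reaction_matrix_carrier len by metis+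
  consider "fst (rs!k1) = fst (rs!k2)" | "fst (rs!k1) = snd (rs!k2) \<and> snd (rs!k1) = fst (rs!k2)"
    using pair by (auto simp: doubleton_eq_iff)
  then have "det ?M = 0 \<or> det ?R = 0"
  proof cases
    case 1
    have "row ?M k1 = row ?M k2"
      by (rule eq_vecI) (use 1 len k in \<open>auto simp: reactant_matrix_def\<close>)
    then show ?thesis using det_identical_rows[OF M k(3) k(1) k(2)] by simp
  next
    case 2
    let ?R' = "multrow k2 (-1) ?R"
    have R': "?R' \<in> carrier_mat n n" using R by simp
    have "row ?R' k1 = row ?R' k2"
      by (rule eq_vecI) (use 2 len k in \<open>auto simp: reaction_matrix_def\<close>)
    then have "det ?R' = 0" using det_identical_rows[OF R' k(3) k(1) k(2)] by simp
    then show ?thesis using det_multrow[OF k(2) R] by simp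
  qed
  then show ?thesis unfolding orientation_def by auto
qed

lemma orientation_restrict:
  assumes "set sp \<subseteq> S"
  shows "orientation sp (map (restrict_reaction S) rs) = orientation sp rs"
proof -
  have S: "\<And>j. j < length sp \<Longrightarrow> sp ! j \<in> S" using assms nth_mem by blast
  have "reactant_matrix sp (map (restrict_reaction S) rs) = reactant_matrix sp rs"
    "reaction_matrix sp (map (restrict_reaction S) rs) = reaction_matrix sp rs"
    by (rule eq_matI; use S in \<open>auto simp: reactant_matrix_def reaction_matrix_def restrict_reaction_def\<close>)+
  then show ?thesis unfolding orientation_def by simp
qed

lemma emb_orientation_sorted:
  "finite S \<Longrightarrow> emb_orientation S rs = orientation (sorted_list_of_set S) rs"
  unfolding emb_orientation_def emb_reactions_def by (rule orientation_restrict) simp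

definition sign_reducible :: "nat list \<Rightarrow> reaction list \<Rightarrow> bool" where
  "sign_reducible sp rs \<longleftrightarrow> orientation sp rs = 0 \<or>
     (\<exists>k<length rs. \<exists>c<length sp. \<exists>w::int. 0 \<le> w \<and>
        orientation sp rs = sgn w * orientation (delete_nth c sp) (delete_nth k rs))"

lemma sign_reducible_zero: "orientation sp rs = 0 \<Longrightarrow> sign_reducible sp rs"
  unfolding sign_reducible_def by simp

lemma sign_reducible_minor:
  "k < length rs \<Longrightarrow> c < length sp \<Longrightarrow> 0 \<le> w \<Longrightarrow>
   orientation sp rs = sgn w * orientation (delete_nth c sp) (delete_nth k rs) \<Longrightarrow>
   sign_reducible sp rs"
  unfolding sign_reducible_def by blast

text \<open>Expansion at a position where the reaction is not self-catalyzing yields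
  sign-reducibility, since then a (a - a') is nonnegative.\<close>

lemma sign_reducible_expand:
  assumes len: "length sp = n" "length rs = n" and k: "k < n" and c: "c < n"
    and sparse: "(\<forall>b<n. b \<noteq> c \<longrightarrow> fst (rs!k) (sp!b) = 0 \<and> snd (rs!k) (sp!b) = 0) \<or>
                 (\<forall>b<n. b \<noteq> k \<longrightarrow> fst (rs!b) (sp!c) = 0 \<and> snd (rs!b) (sp!c) = 0)"
    and not_autocatalytic: "\<not> (1 \<le> fst (rs!k) (sp!c) \<and> fst (rs!k) (sp!c) < snd (rs!k) (sp!c))"
  shows "sign_reducible sp rs"
proof -
  let ?w = "int (fst (rs!k) (sp!c)) * (int (fst (rs!k) (sp!c)) - int (snd (rs!k) (sp!c)))"
  have "0 \<le> ?w" using not_autocatalytic by (cases "fst (rs!k) (sp!c) = 0") auto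
  moreover have "k < length rs" "c < length sp" using k c len by simp_all
  ultimately show ?thesis
    using sign_reducible_minor orientation_expand[OF len k c sparse] by blast
qed

lemma sign_reducible_restrict:
  assumes sp: "set sp \<subseteq> S" and red: "sign_reducible sp (map (restrict_reaction S) rs)"
  shows "sign_reducible sp rs"
proof -
  have minor: "orientation (delete_nth c sp) (delete_nth k (map (restrict_reaction S) rs))
      = orientation (delete_nth c sp) (delete_nth k rs)" for k c
    using sp set_delete_nth_subset[of c sp]
    by (simp add: delete_nth_map orientation_restrict[of _ S])
  show ?thesis
    using red unfolding sign_reducible_def orientation_restrict[OF sp] minor length_map .
qed

lemma orientation_nonneg_by_reduction:
  assumes closed: "\<And>sp rs k c. Q sp rs \<Longrightarrow> k < length rs \<Longrightarrow> c < length sp \<Longrightarrow>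
                      Q (delete_nth c sp) (delete_nth k rs)"
    and step: "\<And>sp rs. Q sp rs \<Longrightarrow> 0 \<le> orientation sp rs \<or> sign_reducible sp rs"
    and "Q sp rs"
  shows "0 \<le> orientation sp rs"
  using \<open>Q sp rs\<close>
proof (induction "length rs" arbitrary: sp rs rule: less_induct)
  case less
  have "sign_reducible sp rs \<Longrightarrow> 0 \<le> orientation sp rs"
    unfolding sign_reducible_def
  proof (elim disjE exE conjE)
    fix k c and w :: int
    assume k: "k < length rs" and c: "c < length sp" and w: "0 \<le> w"
      and eq: "orientation sp rs = sgn w * orientation (delete_nth c sp) (delete_nth k rs)"
    have "length (delete_nth k rs) < length rs" using k by simp
    then have "0 \<le> orientation (delete_nth c sp) (delete_nth k rs)"
      using less.hyps closed[OF less.prems k c] by blast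
    then show ?thesis using eq w by (simp add: sgn_if)
  qed simp
  then show ?case using step[OF less.prems] by (elim disjE)
qed

definition square_subnetwork :: "nat \<Rightarrow> reaction set \<Rightarrow> nat list \<Rightarrow> reaction list \<Rightarrow> bool" where
  "square_subnetwork s R sp rs \<longleftrightarrow> sorted sp \<and> distinct sp \<and> set sp \<subseteq> {..<s} \<and>
     distinct rs \<and> set rs \<subseteq> R \<and> length rs = length sp"

lemma square_subnetwork_minor:
  assumes "square_subnetwork s R sp rs" "k < length rs" "c < length sp"
  shows "square_subnetwork s R (delete_nth c sp) (delete_nth k rs)"
  using assms set_delete_nth_subset[of c sp] set_delete_nth_subset[of k rs]
  unfolding square_subnetwork_def by (auto simp: sorted_delete_nth distinct_delete_nth)

lemma square_subnetwork_iff_embedded: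
  "square_subnetwork s G sp rs \<longleftrightarrow> sorted sp \<and> distinct sp \<and> sq_embedded_data s G (set sp) rs"
  unfolding square_subnetwork_def sq_embedded_data_def by (auto simp: distinct_card)

lemma orientation_sorted_set:
  "sorted sp \<Longrightarrow> distinct sp \<Longrightarrow> emb_orientation (set sp) rs = orientation sp rs"
  by (simp add: emb_orientation_sorted sorted_list_of_set.idem_if_sorted_distinct)

lemma degradation_reducible:
  assumes len: "length sp = n" "length rs = n" and ds: "distinct sp" and k: "k < n"
    and deg: "fst (rs!k) = zero_cplx \<or> is_mono_degradation (rs!k)"
  shows "sign_reducible sp rs"
  using deg
proof
  assume "fst (rs!k) = zero_cplx"
  then have "orientation sp rs = 0"
    by (intro orientation_zero_reactant_row[OF len k]) (simp add: zero_cplx_def)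
  then show ?thesis by (rule sign_reducible_zero)
next
  assume "is_mono_degradation (rs!k)"
  then obtain i a b where ba: "b \<le> a" and fk: "fst (rs!k) = (\<lambda>j. if j = i then a else 0)"
    and sk: "snd (rs!k) = (\<lambda>j. if j = i then b else 0)"
    unfolding is_mono_degradation_def by blast
  show ?thesis
  proof (cases "i \<in> set sp")
    case True
    then obtain c where c: "c < n" "sp ! c = i" using len by (metis in_set_conv_nth)
    have "sp ! b' \<noteq> i" if "b' < n" "b' \<noteq> c" for b'
      using that c ds len nth_eq_iff_index_eq by metis
    then have "\<forall>b'<n. b' \<noteq> c \<longrightarrow> fst (rs!k) (sp!b') = 0 \<and> snd (rs!k) (sp!b') = 0"
      by (simp add: fk sk)
    moreover have "\<not> (1 \<le> fst (rs!k) (sp!c) \<and> fst (rs!k) (sp!c) < snd (rs!k) (sp!c))"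
      using ba c(2) by (simp add: fk sk)
    ultimately show ?thesis using sign_reducible_expand[OF len k c(1)] by blast
  next
    case False
    have "orientation sp rs = 0"
    proof (rule orientation_zero_reactant_row[OF len k])
      fix b' assume "b' < n"
      then have "sp ! b' \<noteq> i" using False len by auto
      then show "fst (rs!k) (sp!b') = 0" by (simp add: fk)
    qed
    then show ?thesis by (rule sign_reducible_zero)
  qed
qed

lemma outflow_is_mono_degradation: "is_outflow r \<Longrightarrow> is_mono_degradation r"
proof -
  assume "is_outflow r"
  then obtain i where "r = (unit_cplx i, zero_cplx)" unfolding is_outflow_def by blast
  then show "is_mono_degradation r" unfolding is_mono_degradation_def
    by (intro exI[of _ i] exI[of _ "1::nat"] exI[of _ "0::nat"]) (auto simp: unit_cplx_def zero_cplx_def)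
qed

lemma cond_a_failure_reducible:
  assumes len: "length sp = length rs" and ds: "distinct sp" and fail: "\<not> cond_a rs"
  shows "sign_reducible sp rs"
proof -
  obtain r where "r \<in> set rs"
    and bad: "is_outflow r \<or> is_inflow r \<or> is_gen_inflow r \<or> is_mono_degradation r"
    using fail unfolding cond_a_def by blast
  then obtain k where k: "k < length rs" and "rs!k = r" by (metis in_set_conv_nth)
  then have "fst (rs!k) = zero_cplx \<or> is_mono_degradation (rs!k)"
    using bad outflow_is_mono_degradation[of r] unfolding is_inflow_def is_gen_inflow_def by auto
  then show ?thesis using degradation_reducible[OF len refl ds k] by blast
qed

text \<open>Failure of condition (b) at a species: either two rows carry the same reaction up to
  reversal, or the species column has at most one nonzero row.\<close>

lemma cond_b_failure_reducible:
  assumes len: "length sp = n" "length rs = n" and c: "c < n"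
    and few: "card {{fst r, snd r} | r. r \<in> set rs \<and> (0 < fst r (sp!c) \<or> 0 < snd r (sp!c))} < 2"
    and no_selfcat: "\<forall>r\<in>set rs. \<not> self_catalyzing r"
  shows "sign_reducible sp rs"
proof -
  define P where "P = {{fst r, snd r} | r. r \<in> set rs \<and> (0 < fst r (sp!c) \<or> 0 < snd r (sp!c))}"
  define involves where "involves k \<longleftrightarrow> 0 < fst (rs!k) (sp!c) \<or> 0 < snd (rs!k) (sp!c)" for k
  have "P \<subseteq> (\<lambda>r. {fst r, snd r}) ` set rs" unfolding P_def by blast
  then have "finite P" using finite_subset by blast
  moreover have "card P \<le> Suc 0" using few unfolding P_def by simp
  ultimately have P_single: "p = q" if "p \<in> P" "q \<in> P" for p q
    using card_le_Suc0_iff_eq that by blast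
  have in_P: "{fst (rs!k), snd (rs!k)} \<in> P" if "k < n" "involves k" for k
  proof -
    have "rs!k \<in> set rs" using that(1) len by simp
    then show ?thesis using that(2) unfolding P_def involves_def by blast
  qed
  consider (two) k1 k2 where "k1 < n" "k2 < n" "k1 \<noteq> k2" "involves k1" "involves k2"
    | (one) k where "k < n" "involves k" "\<forall>b<n. b \<noteq> k \<longrightarrow> \<not> involves b"
    | (none) "\<forall>b<n. \<not> involves b"
    by blast
  then show ?thesis
  proof cases
    case two
    have "orientation sp rs = 0"
      by (rule orientation_same_pair[OF len two(1-3) P_single[OF in_P[OF two(1,4)] in_P[OF two(2,5)]]])
    then show ?thesis by (rule sign_reducible_zero)
  next
    case one
    have "\<forall>b<n. b \<noteq> k \<longrightarrow> fst (rs!b) (sp!c) = 0 \<and> snd (rs!b) (sp!c) = 0"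
      using one(3) unfolding involves_def by simp
    moreover have "\<not> (1 \<le> fst (rs!k) (sp!c) \<and> fst (rs!k) (sp!c) < snd (rs!k) (sp!c))"
    proof -
      have "rs!k \<in> set rs" using one(1) len by simp
      then have "\<not> self_catalyzing (rs!k)" using no_selfcat by blast
      then show ?thesis unfolding self_catalyzing_def by blast
    qed
    ultimately show ?thesis using sign_reducible_expand[OF len one(1) c] by blast
  next
    case none
    have "orientation sp rs = 0"
      by (rule orientation_zero_reactant_col[OF len c]) (use none in \<open>simp add: involves_def\<close>)
    then show ?thesis by (rule sign_reducible_zero)
  qed
qed

definition outflow :: "nat \<Rightarrow> reaction" where
  "outflow i = (unit_cplx i, zero_cplx)"

lemma unit_cplx_ne_zero: "unit_cplx i \<noteq> zero_cplx"
  unfolding unit_cplx_def zero_cplx_def by (metis one_neq_zero)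

text \<open>Outflow rows can be expanded away together with the columns of their species.\<close>

lemma orientation_append_outflows:
  assumes "distinct T" "set T \<subseteq> set sp" "distinct sp" "length sp = length rs + length T"
  shows "orientation sp (rs @ map outflow T) = orientation (filter (\<lambda>x. x \<notin> set T) sp) rs"
  using assms
proof (induction T arbitrary: sp)
  case (Cons t T)
  let ?n = "length sp" and ?rs = "rs @ outflow t # map outflow T" and ?k = "length rs"
  obtain c where c: "c < ?n" "sp ! c = t"
    using Cons.prems(2) by (metis in_set_conv_nth list.set_intros(1) subsetD)
  have k: "?k < ?n" using Cons.prems(4) by simp
  have row: "fst (?rs ! ?k) (sp ! b) = (if b = c then 1 else 0)" "snd (?rs ! ?k) (sp ! b) = 0"
    if "b < ?n" for b
    using that c Cons.prems(3) nth_eq_iff_index_eq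
    by (auto simp: outflow_def unit_cplx_def zero_cplx_def)
  have "orientation sp ?rs = orientation (delete_nth c sp) (delete_nth ?k ?rs)"
    using orientation_expand[OF refl _ k c(1)] Cons.prems(4) c(1) row by simp
  also have "\<dots> = orientation (filter (\<lambda>x. x \<noteq> t) sp) (rs @ map outflow T)"
    using c by (simp add: delete_nth_append delete_nth_distinct_filter[OF Cons.prems(3)])
  also have "\<dots> = orientation (filter (\<lambda>x. x \<notin> set T) (filter (\<lambda>x. x \<noteq> t) sp)) rs"
  proof (rule Cons.IH)
    have "length (filter (\<lambda>x. x \<noteq> t) sp) = ?n - 1"
      using c delete_nth_distinct_filter[OF Cons.prems(3) c(1)] length_delete_nth[OF c(1)] by simp
    then show "length (filter (\<lambda>x. x \<noteq> t) sp) = length rs + length T"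
      using Cons.prems(4) by simp
  qed (use Cons.prems in auto)
  finally show ?case by (simp add: filter_filter conj_commute)
qed simp

lemma jacobian_implies_embedded:
  assumes C: "CFSTR s R" and J: "jacobian_criterion s R"
    and D: "sq_embedded_data s (nonflow_subnetwork R) S rs"
  shows "0 \<le> emb_orientation S rs"
proof -
  have S: "S \<subseteq> {..<s}" and dr: "distinct rs" and rG: "set rs \<subseteq> nonflow_subnetwork R"
    and lr: "length rs = card S" using D unfolding sq_embedded_data_def by auto
  define T where "T = filter (\<lambda>i. i \<notin> S) [0..<s]"
  define full where "full = rs @ map outflow T"
  have fS: "finite S" using S finite_subset by blast
  have sorted_S: "filter (\<lambda>i. i \<in> S) [0..<s] = sorted_list_of_set S"
  proof -
    have "set (filter (\<lambda>i. i \<in> S) [0..<s]) = S" using S by auto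
    then show ?thesis
      by (metis distinct_filter distinct_upt sorted_filter[where f = id, simplified] sorted_upt
          sorted_list_of_set.idem_if_sorted_distinct)
  qed
  have len: "length rs + length T = s"
    using sum_length_filter_compl[of "\<lambda>i. i \<in> S" "[0..<s]"] sorted_S lr fS
    unfolding T_def by simp
  have nonflow: "\<not> is_flow r" if "r \<in> set rs" for r
    using that rG unfolding nonflow_subnetwork_def by auto
  have "inj_on outflow (set T)"
    by (rule inj_onI) (auto simp: outflow_def unit_cplx_def fun_eq_iff split: if_splits)
  then have "distinct full"
    using dr nonflow unfolding full_def T_def is_flow_def is_outflow_def outflow_def
    by (auto simp: distinct_map)
  moreover have "set full \<subseteq> R"
    using rG C unfolding full_def T_def CFSTR_def nonflow_subnetwork_def outflow_def by auto
  moreover have "\<forall>r\<in>set full. \<not> is_inflow r"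
    using nonflow unit_cplx_ne_zero unfolding full_def is_flow_def is_inflow_def outflow_def by auto
  ultimately have "0 \<le> orientation [0..<s] full"
    using J len unfolding jacobian_criterion_def full_def by auto
  moreover have "orientation [0..<s] full = orientation (filter (\<lambda>x. x \<notin> set T) [0..<s]) rs"
    unfolding full_def by (rule orientation_append_outflows) (use len in \<open>auto simp: T_def\<close>)
  moreover have "filter (\<lambda>x. x \<notin> set T) [0..<s] = sorted_list_of_set S"
    unfolding sorted_S[symmetric] T_def by (rule filter_cong) auto
  ultimately show ?thesis using emb_orientation_sorted[OF fS] by simp
qed

lemma embedded_implies_jacobian:
  assumes H: "\<forall>S rs. sq_embedded_data s (nonflow_subnetwork R) S rs \<longrightarrow> 0 \<le> emb_orientation S rs"
  shows "jacobian_criterion s R"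
proof -
  let ?R = "{r \<in> R. \<not> is_inflow r}"
  have step: "0 \<le> orientation sp rs \<or> sign_reducible sp rs"
    if Q: "square_subnetwork s ?R sp rs" for sp rs
  proof (cases "\<exists>r\<in>set rs. is_outflow r")
    case True
    then obtain k where k: "k < length rs" "is_outflow (rs!k)" by (metis in_set_conv_nth)
    have "is_mono_degradation (rs!k)" using k(2) by (rule outflow_is_mono_degradation)
    moreover have "length sp = length rs" "distinct sp" using Q unfolding square_subnetwork_def by auto
    ultimately have "sign_reducible sp rs" using degradation_reducible[OF _ refl _ k(1)] by blast
    then show ?thesis ..
  next
    case False
    then have "set rs \<subseteq> nonflow_subnetwork R"
      using Q unfolding square_subnetwork_def nonflow_subnetwork_def is_flow_def by auto
    then have "square_subnetwork s (nonflow_subnetwork R) sp rs"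
      using Q unfolding square_subnetwork_def by auto
    then have sp: "sorted sp" "distinct sp" and "sq_embedded_data s (nonflow_subnetwork R) (set sp) rs"
      unfolding square_subnetwork_iff_embedded by auto
    then have "0 \<le> emb_orientation (set sp) rs" using H by blast
    then show ?thesis using orientation_sorted_set[OF sp] by simp
  qed
  show ?thesis unfolding jacobian_criterion_def
  proof (intro allI impI)
    fix rs assume "distinct rs \<and> length rs = s \<and> set rs \<subseteq> R \<and> (\<forall>r\<in>set rs. \<not> is_inflow r)"
    then have "square_subnetwork s ?R [0..<s] rs" unfolding square_subnetwork_def by auto
    then show "0 \<le> orientation [0..<s] rs"
      using orientation_nonneg_by_reduction[where Q = "square_subnetwork s ?R", OF square_subnetwork_minor step]
      by blast
  qed
qed

lemma self_catalyzing_negative: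
  assumes net: "reaction_network s R" and r: "r \<in> R" and sc: "self_catalyzing r"
  obtains j where "j < s" "emb_orientation {j} [r] < 0"
proof -
  obtain j where j: "1 \<le> fst r j" "fst r j < snd r j" using sc unfolding self_catalyzing_def by blast
  have "j < s" using net r j unfolding reaction_network_def by (metis not_less not_one_le_zero)
  have "det (reactant_matrix [j] [r]) = int (fst r j)"
    "det (reaction_matrix [j] [r]) = int (fst r j) - int (snd r j)"
    by (subst det_single; auto simp: reactant_matrix_def reaction_matrix_def)+
  then have "emb_orientation {j} [r] = sgn (int (fst r j) * (int (fst r j) - int (snd r j)))"
    using emb_orientation_sorted[of "{j}" "[r]"] by (simp add: orientation_def)
  also have "\<dots> < 0" using j by (simp add: sgn_mult)
  finally show thesis using that \<open>j < s\<close> by blast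
qed

lemma self_catalyzing_restrict: "self_catalyzing (restrict_reaction S r) \<Longrightarrow> self_catalyzing r"
  unfolding self_catalyzing_def restrict_reaction_def by (auto split: if_splits)

lemma reduced_step:
  assumes no_selfcat: "\<forall>r\<in>G. \<not> self_catalyzing r"
    and H: "\<forall>S rs. sq_embedded_data s G S rs \<and> cond_a (emb_reactions S rs)
                  \<and> cond_b S (emb_reactions S rs) \<longrightarrow> 0 \<le> emb_orientation S rs"
    and Q: "square_subnetwork s G sp rs"
  shows "0 \<le> orientation sp rs \<or> sign_reducible sp rs"
proof -
  let ?N = "emb_reactions (set sp) rs"
  have sp: "sorted sp" "distinct sp" and D: "sq_embedded_data s G (set sp) rs"
    using Q unfolding square_subnetwork_iff_embedded by auto
  have len: "length sp = length ?N"
    using Q unfolding square_subnetwork_def emb_reactions_def by simp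
  consider "cond_a ?N \<and> cond_b (set sp) ?N" | "\<not> cond_a ?N" | "\<not> cond_b (set sp) ?N" by blast
  then show ?thesis
  proof cases
    case 1
    then have "0 \<le> emb_orientation (set sp) rs" using H D by blast
    then show ?thesis using orientation_sorted_set[OF sp] by simp
  next
    case 2
    then have "sign_reducible sp ?N" by (rule cond_a_failure_reducible[OF len sp(2)])
    then show ?thesis unfolding emb_reactions_def using sign_reducible_restrict by blast
  next
    case 3
    then obtain i where "i \<in> set sp" and few_i: "card {{fst r, snd r} | r. r \<in> set ?N \<and>
        (0 < fst r i \<or> 0 < snd r i)} < 2"
      unfolding cond_b_def by (auto simp: not_le)
    then obtain c where c: "c < length sp" and "sp!c = i" by (metis in_set_conv_nth)
    with few_i have few: "card {{fst r, snd r} | r. r \<in> set ?N \<and>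
        (0 < fst r (sp!c) \<or> 0 < snd r (sp!c))} < 2" by simp
    have "\<forall>r\<in>set ?N. \<not> self_catalyzing r"
    proof
      fix r assume "r \<in> set ?N"
      then obtain r0 where "r0 \<in> G" and "r = restrict_reaction (set sp) r0"
        using D unfolding emb_reactions_def sq_embedded_data_def by auto
      then show "\<not> self_catalyzing r" using no_selfcat self_catalyzing_restrict by blast
    qed
    then have "sign_reducible sp ?N"
      using cond_b_failure_reducible[OF refl len[symmetric] c few] by blast
    then show ?thesis unfolding emb_reactions_def using sign_reducible_restrict by blast
  qed
qed

lemma reduced_implies_embedded:
  assumes no_selfcat: "\<forall>r\<in>G. \<not> self_catalyzing r"
    and H: "\<forall>S rs. sq_embedded_data s G S rs \<and> cond_a (emb_reactions S rs)
                  \<and> cond_b S (emb_reactions S rs) \<longrightarrow> 0 \<le> emb_orientation S rs"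
    and D: "sq_embedded_data s G S rs"
  shows "0 \<le> emb_orientation S rs"
proof -
  have "finite S" using D finite_subset unfolding sq_embedded_data_def by blast
  then have "square_subnetwork s G (sorted_list_of_set S) rs"
    using D unfolding square_subnetwork_iff_embedded by simp
  then show ?thesis
    using orientation_nonneg_by_reduction[where Q = "square_subnetwork s G",
        OF square_subnetwork_minor reduced_step[OF no_selfcat H]]
      emb_orientation_sorted[OF \<open>finite S\<close>] by simp
qed


theorem mainTheorem3:
  fixes s :: nat and R :: "reaction set"
  assumes "CFSTR s R"
  defines "G \<equiv> nonflow_subnetwork R"
  shows "(jacobian_criterion s R \<longleftrightarrow>
            (\<forall>S rs. sq_embedded_data s G S rs \<longrightarrow> emb_orientation S rs \<ge> 0))
       \<and> (jacobian_criterion s R \<longleftrightarrow>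
            ((\<forall>r\<in>G. \<not> self_catalyzing r) \<and>
             (\<forall>S rs. sq_embedded_data s G S rs \<and> cond_a (emb_reactions S rs)
                     \<and> cond_b S (emb_reactions S rs) \<longrightarrow> emb_orientation S rs \<ge> 0)))"
proof -
  let ?embedded = "\<forall>S rs. sq_embedded_data s G S rs \<longrightarrow> 0 \<le> emb_orientation S rs"
  have one_two: "jacobian_criterion s R \<longleftrightarrow> ?embedded"
    unfolding G_def using jacobian_implies_embedded[OF assms(1)] embedded_implies_jacobian by blast
  have no_selfcat: "\<forall>r\<in>G. \<not> self_catalyzing r" if ?embedded
  proof (intro ballI notI)
    fix r assume r: "r \<in> G" and "self_catalyzing r"
    moreover have "reaction_network s R" "G \<subseteq> R"
      using assms(1) unfolding CFSTR_def G_def nonflow_subnetwork_def by auto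
    ultimately obtain j where "j < s" "emb_orientation {j} [r] < 0"
      using self_catalyzing_negative by blast
    moreover have "sq_embedded_data s G {j} [r]"
      using \<open>j < s\<close> r unfolding sq_embedded_data_def by simp
    ultimately show False using that by fastforce
  qed
  show ?thesis
    using one_two no_selfcat reduced_implies_embedded[of G s] by blast
qed

end
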